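(* The dynamical system $(X,T)$ is topologically mixing: for any nonempty open sets $U,V\subset X$ there is $N$ such that $T^n(U)\cap V\neq\emptyset$ for all $n\geq N$.
   Context: Paths and cycles: a graph is $G=(V,E)$ with $V$ finite and $E\subset V\times V$. A path is a finite sequence of vertices $(u_0,\dots,u_L)$ with $(u_j,u_{j+1})\in E$; its length is $|\cdot|=L$; a cycle is a path with $u_0=u_L$. For paths where one ends where the next starts, $+$ denotes concatenation and $a\,c$ means the cycle $c$ traversed $a$ times. Construction: $G_0=(V_0,E_0)$ with $V_0=\{v_{0,0}\}$, $E_0=\{e_{0,0}\}$, $e_{0,0}=(v_{0,0},v_{0,0})$. For $n\geq1$, $G_n=(V_n,E_n)$ consists of a vertex $v_{n,0}$, the loop $e_{n,0}=(v_{n,0},v_{n,0})$, and $n$ cycles $c_{n,1},\dots,c_{n,n}$, each starting and ending at $v_{n,0}$, whose vertices other than $v_{n,0}$ are pairwise distinct (within each cycle and across cycles); $V_n$ is the set of all these vertices and $E_n$ consists of $e_{n,0}$ and the edges of the cycles. The maps $\varphi_n\colon V_{n+1}\to V_n$ and the lengths of the cycles $c_{n+1,i}$ are defined together: $\varphi_n(v_{n+1,0})=v_{n,0}$, and for each $i$ a path $P_{n,i}$ in $G_n$ from $v_{n,0}$ to $v_{n,0}$ is given; $c_{n+1,i}$ has length $|P_{n,i}|$ and $\varphi_n$ maps its $j$-th vertex to the $j$-th vertex of $P_{n,i}$ (written $\varphi_n(c_{n+1,i})=P_{n,i}$). The paths are: $P_{0,1}=10\,e_{0,0}$; for $n\geq1$: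 $P_{n,i}=e_{n,0}+2c_{n,i}+2c_{n,i+1}+\dots+2c_{n,n}+e_{n,0}$ for $2\leq i\leq n$; $P_{n,n+1}=(n+2)^2\big(\sum_{i=1}^n|c_{n,i}|\big)\,e_{n,0}$; and $P_{n,1}=(1\,e_{n,0}+2c_{n,1})+(2\,e_{n,0}+2c_{n,1})+\dots+(k_n\,e_{n,0}+2c_{n,1})+e_{n,0}+2c_{n,2}+\dots+2c_{n,n}+e_{n,0}$, where $k_n=2\big(1+\sum_{i=1}^n|c_{n,i}|\big)$. Let $X=\{x\in\prod_{n\geq0}V_n:\varphi_n(x_{n+1})=x_n\ \forall n\}$ with metric $d(x,y)=2^{-\min\{i:x_i\neq y_i\}}$ ($d(x,x)=0$); $X$ is a compact zero-dimensional metric space, and $T\colon X\to X$ defined by $T(x)=y$ iff $(x_n,y_n)\in E_n$ for all $n$ is a well-defined homeomorphism. Write $x_n$ for the $n$-th coordinate of $x$. *)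

theory Defs
  imports Complex_Main
begin

text \<open>Vertices of every graph G_n: Base is v_{n,0}; CV i j is the j-th vertex
(0 < j < |c_{n,i}|) of the cycle c_{n,i}.  Paths are lists of vertices
(a path of length L is a list of L+1 vertices).\<close>

datatype vtx = Base | CV nat nat

definition pcat :: "vtx list \<Rightarrow> vtx list \<Rightarrow> vtx list" where
  "pcat p q = p @ tl q"

definition loop :: "vtx list" where
  "loop = [Base, Base]"

primrec rep :: "nat \<Rightarrow> vtx list \<Rightarrow> vtx list" where
  "rep 0 c = [Base]"
| "rep (Suc a) c = pcat c (rep a c)"

primrec pcats :: "vtx list list \<Rightarrow> vtx list" where
  "pcats [] = [Base]"
| "pcats (p # ps) = pcat p (pcats ps)"

definition cyc :: "(nat \<Rightarrow> nat) \<Rightarrow> nat \<Rightarrow> vtx list" where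
  "cyc L i = Base # map (CV i) [1..<L i] @ [Base]"

definition Pgen :: "(nat \<Rightarrow> nat) \<Rightarrow> nat \<Rightarrow> nat \<Rightarrow> vtx list" where
  "Pgen L n i =
     (if n = 0 then rep 10 loop
      else if i = 1 then
        pcats (map (\<lambda>a. pcat (rep a loop) (rep 2 (cyc L 1)))
                   [1..<2 * (1 + (\<Sum>j=1..n. L j)) + 1]
               @ [loop] @ map (\<lambda>j. rep 2 (cyc L j)) [2..<n+1] @ [loop])
      else if i = n + 1 then rep ((n + 2)^2 * (\<Sum>j=1..n. L j)) loop
      else pcats ([loop] @ map (\<lambda>j. rep 2 (cyc L j)) [i..<n+1] @ [loop]))"

text \<open>clen n i = |c_{n,i}| (for 1 \<le> i \<le> n)\<close>
primrec clen :: "nat \<Rightarrow> nat \<Rightarrow> nat" where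
  "clen 0 i = 0"
| "clen (Suc n) i = length (Pgen (clen n) n i) - 1"

definition P :: "nat \<Rightarrow> nat \<Rightarrow> vtx list" where
  "P n i = Pgen (clen n) n i"

definition V :: "nat \<Rightarrow> vtx set" where
  "V n = insert Base {CV i j | i j. 1 \<le> i \<and> i \<le> n \<and> 0 < j \<and> j < clen n i}"

definition E :: "nat \<Rightarrow> (vtx \<times> vtx) set" where
  "E n = insert (Base, Base)
     (\<Union>i\<in>{1..n}. set (zip (cyc (clen n) i) (tl (cyc (clen n) i))))"

fun phi :: "nat \<Rightarrow> vtx \<Rightarrow> vtx" where
  "phi n Base = Base"
| "phi n (CV i j) = P n i ! j"

definition Xsp :: "(nat \<Rightarrow> vtx) set" where
  "Xsp = {x. (\<forall>n. x n \<in> V n) \<and> (\<forall>n. phi n (x (Suc n)) = x n)}"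

definition dist_X :: "(nat \<Rightarrow> vtx) \<Rightarrow> (nat \<Rightarrow> vtx) \<Rightarrow> real" where
  "dist_X x y = (if x = y then 0 else 2 powr (- real (LEAST i. x i \<noteq> y i)))"

definition open_X :: "(nat \<Rightarrow> vtx) set \<Rightarrow> bool" where
  "open_X U \<longleftrightarrow> U \<subseteq> Xsp \<and>
     (\<forall>x\<in>U. \<exists>e>0. \<forall>y\<in>Xsp. dist_X x y < e \<longrightarrow> y \<in> U)"

definition T :: "(nat \<Rightarrow> vtx) \<Rightarrow> (nat \<Rightarrow> vtx)" where
  "T x = (THE y. y \<in> Xsp \<and> (\<forall>n. (x n, y n) \<in> E n))"

end

theory Submission
  imports Defs
begin

text \<open>
  If the level-\<open>M\<close> coordinate of a point of \<open>X\<close> lies inside the cycle \<open>c_{M,1}\<close>, then \<open>T\<close> moves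
  that coordinate one step along \<open>c_{M,1}\<close>, and every position inside \<open>c_{M,1}\<close> is the coordinate
  of some point. Fix vertices \<open>u, w\<close> of \<open>G_m\<close>; both lie under positions of \<open>c_{m+1,1}\<close>, since
  \<open>P_{m,1}\<close> visits all of \<open>G_m\<close>. The path \<open>P_{K,1}\<close> contains \<open>c_{K,1}\<close> at its start and once
  more near its end, and, for every \<open>1 \<le> a < k_K\<close>, two copies of \<open>c_{K,1}\<close>
  separated by exactly \<open>a\<close> loops. Hence the distances from a position of \<open>c_{K+2,1}\<close> lying over
  \<open>u\<close> to one lying over \<open>w\<close> fill an interval \<open>[D_K + 1, D_K + k_{K+1})\<close> with \<open>D_K \<le> k_K\<close>.
  These intervals overlap and reach arbitrarily far, so all large \<open>n\<close> occur; since open sets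
  contain cylinders \<open>{y. y_m = x_m}\<close>, this is mixing.
\<close>

section \<open>Concatenating closed paths\<close>

definition based :: "vtx list \<Rightarrow> bool" where
  "based p \<longleftrightarrow> p \<noteq> [] \<and> hd p = Base \<and> last p = Base"

lemma based_loop: "based loop"
  by (simp add: based_def loop_def)

lemma based_cyc: "based (cyc L i)"
  by (simp add: based_def cyc_def)

lemma last_tl: "tl xs \<noteq> [] \<Longrightarrow> last (tl xs) = last xs"
  by (cases xs) auto

lemma based_pcats: "\<forall>p\<in>set ps. based p \<Longrightarrow> based (pcats ps)"
  by (induction ps) (auto simp: pcat_def based_def last_append last_tl)

lemma rep_eq_pcats: "rep a c = pcats (replicate a c)"
  by (induction a) auto

lemma based_rep: "based c \<Longrightarrow> based (rep a c)"
  by (simp add: rep_eq_pcats based_pcats)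

lemma rep_loop: "rep a loop = replicate (Suc a) Base"
  by (induction a) (auto simp: pcat_def loop_def)

lemma rep_2: "rep 2 c = c @ tl c"
  by (simp add: numeral_2_eq_2 pcat_def)

lemma length_rep: "c \<noteq> [] \<Longrightarrow> length (rep a c) = 1 + a * (length c - 1)"
  by (induction a) (auto simp: pcat_def)

lemma pcats_append:
  assumes "\<forall>p\<in>set (ps @ qs). based p"
  shows "pcats (ps @ qs) = pcats ps @ tl (pcats qs)"
  using assms
proof (induction ps)
  case Nil
  then have "based (pcats qs)" by (simp add: based_pcats)
  then show ?case by (cases "pcats qs") (auto simp: based_def)
next
  case (Cons p ps)
  then have "pcats ps \<noteq> []" using based_pcats by (auto simp: based_def)
  with Cons show ?case by (simp add: pcat_def)
qed

lemma pcat_pcats: "\<forall>p\<in>set (ps @ qs). based p \<Longrightarrow> pcat (pcats ps) (pcats qs) = pcats (ps @ qs)"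
  by (simp add: pcats_append pcat_def)

lemma length_pcats:
  assumes "\<forall>p\<in>set ps. p \<noteq> []"
  shows "length (pcats ps) = 1 + sum_list (map (\<lambda>p. length p - 1) ps)"
  using assms
proof (induction ps)
  case (Cons p ps)
  then have "pcats ps \<noteq> []" by (cases ps) (auto simp: pcat_def)
  with Cons show ?case by (simp add: pcat_def)
qed simp

lemma in_set_tlD: "x \<in> set (tl xs) \<Longrightarrow> x \<in> set xs"
  by (cases xs) auto

lemma set_pcats: "set (pcats ps) \<subseteq> insert Base (\<Union>p\<in>set ps. set p)"
  by (induction ps) (auto simp: pcat_def dest: in_set_tlD)

lemma in_set_pcats:
  assumes "v \<noteq> Base" "p \<in> set ps" "v \<in> set p" "\<forall>q\<in>set ps. based q"
  shows "v \<in> set (pcats ps)"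
  using assms
proof (induction ps)
  case (Cons q ps)
  show ?case
  proof (cases "p = q")
    case False
    then have "v \<in> set (pcats ps)" using Cons by auto
    moreover have "based (pcats ps)" using based_pcats Cons.prems by auto
    ultimately have "v \<in> set (tl (pcats ps))" using Cons.prems(1) by (cases "pcats ps") (auto simp: based_def)
    then show ?thesis by (simp add: pcat_def)
  qed (use Cons.prems in \<open>simp add: pcat_def\<close>)
qed simp

lemma successively_pcats:
  assumes "\<forall>p\<in>set ps. based p \<and> successively R p" and "R Base Base"
  shows "successively R (pcats ps)"
  using assms
proof (induction ps)
  case (Cons p ps)
  let ?q = "pcats ps"
  have q: "?q \<noteq> [] \<and> hd ?q = Base" using based_pcats Cons.prems by (auto simp: based_def)
  have sq: "successively R ?q" using Cons by auto
  then have "successively R (tl ?q)" using q by (cases ?q) (auto simp: successively_Cons)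
  moreover have "tl ?q \<noteq> [] \<Longrightarrow> R (last p) (hd (tl ?q))"
    using sq q Cons.prems by (cases ?q) (auto simp: successively_Cons based_def)
  ultimately show ?case using Cons.prems by (auto simp: pcat_def successively_append_iff)
qed simp

lemma length_cyc: "length (cyc L i) = max (L i) 1 + 1"
  by (simp add: cyc_def)

lemma nth_cyc: "t < length (cyc L i) \<Longrightarrow> cyc L i ! t = (if 0 < t \<and> t < L i then CV i t else Base)"
  by (auto simp: cyc_def nth_Cons nth_append split: nat.splits)

section \<open>The shape of \<open>P n 1\<close>\<close>

definition kseq :: "(nat \<Rightarrow> nat) \<Rightarrow> nat \<Rightarrow> nat" where
  "kseq L n = 2 * (1 + (\<Sum>j=1..n. L j))"

definition c1_block :: "(nat \<Rightarrow> nat) \<Rightarrow> nat \<Rightarrow> vtx list" where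
  "c1_block L a = pcat (rep a loop) (rep 2 (cyc L 1))"

definition P1_tail :: "(nat \<Rightarrow> nat) \<Rightarrow> nat \<Rightarrow> vtx list list" where
  "P1_tail L n = [loop] @ map (\<lambda>j. rep 2 (cyc L j)) [2..<n+1] @ [loop]"

lemma Pgen_1:
  "1 \<le> n \<Longrightarrow> Pgen L n 1 = pcats (map (c1_block L) [1..<kseq L n + 1] @ P1_tail L n)"
  by (simp add: Pgen_def c1_block_def[abs_def] P1_tail_def kseq_def del: upt_Suc)

lemma c1_block_eq:
  "c1_block L a = replicate (Suc a) Base @ map (CV 1) [1..<L 1] @ [Base] @ map (CV 1) [1..<L 1] @ [Base]"
  by (simp add: c1_block_def rep_loop rep_2 pcat_def cyc_def)

lemma based_c1_block: "based (c1_block L a)"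
  by (simp add: c1_block_eq based_def)

lemma based_P1_tail: "\<forall>p\<in>set (P1_tail L n). based p"
  unfolding P1_tail_def using based_loop based_rep[OF based_cyc] by (simp del: upt_Suc)

lemma kseq_pos: "1 \<le> kseq L n"
  by (simp add: kseq_def)

lemma kseq_ge: "1 \<le> n \<Longrightarrow> 2 * L 1 \<le> kseq L n"
  using member_le_sum[of 1 "{1..n}" L] by (simp add: kseq_def)

lemma Pgen_1_starts_with_cyc:
  assumes "1 \<le> n"
  shows "\<exists>ys. Pgen L n 1 = Base # cyc L 1 @ ys"
proof -
  have "[1..<kseq L n + 1] = 1 # [2..<kseq L n + 1]"
    using kseq_pos[of L n] by (simp add: upt_conv_Cons numeral_2_eq_2 del: upt_Suc)
  then have "Pgen L n 1 = pcats (c1_block L 1 # map (c1_block L) [2..<kseq L n + 1] @ P1_tail L n)"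
    using Pgen_1[OF assms] by (simp del: upt_Suc)
  also have "\<dots> = c1_block L 1 @ tl (pcats (map (c1_block L) [2..<kseq L n + 1] @ P1_tail L n))"
    by (simp only: pcats.simps pcat_def)
  finally show ?thesis by (simp add: c1_block_eq cyc_def del: upt_Suc)
qed

lemma length_tl_P1_tail:
  assumes "\<And>j. 2 \<le> j \<Longrightarrow> j \<le> n \<Longrightarrow> 1 \<le> L j"
  shows "length (tl (pcats (P1_tail L n))) = 2 + (\<Sum>j=2..n. 2 * L j)"
proof -
  have "length (rep 2 (cyc L j)) - 1 = 2 * L j" if "j \<in> set [2..<n+1]" for j
  proof -
    have "1 \<le> L j" using that by (intro assms) auto
    then show ?thesis by (simp add: length_rep length_cyc cyc_def)
  qed
  then have "sum_list (map (\<lambda>j. length (rep 2 (cyc L j)) - 1) [2..<n+1])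
      = sum_list (map (\<lambda>j. 2 * L j) [2..<n+1])"
    by (intro arg_cong[where f=sum_list] map_cong) auto
  also have "\<dots> = (\<Sum>j=2..n. 2 * L j)"
    by (simp only: sum_set_upt_conv_sum_list_nat[symmetric] set_upt)
       (simp add: atLeastLessThanSuc_atLeastAtMost)
  finally show ?thesis
    using length_pcats[of "P1_tail L n"] based_P1_tail[of L n]
    by (simp add: P1_tail_def loop_def comp_def based_def del: upt_Suc)
qed

lemma Pgen_1_last_cyc:
  assumes "1 \<le> n" and pos: "\<And>j. 1 \<le> j \<Longrightarrow> j \<le> n \<Longrightarrow> 1 \<le> L j"
  shows "\<exists>xs ys. Pgen L n 1 = xs @ cyc L 1 @ ys \<and> 2 * L 1 + length ys \<le> kseq L n"
proof -
  let ?k = "kseq L n"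
  have "[1..<?k + 1] = [1..<?k] @ [?k]" using kseq_pos[of L n] by simp
  then have "Pgen L n 1 = pcats (map (c1_block L) [1..<?k] @ (c1_block L ?k # P1_tail L n))"
    using Pgen_1[OF assms(1)] by simp
  also have "\<dots> = pcats (map (c1_block L) [1..<?k]) @ tl (pcats (c1_block L ?k # P1_tail L n))"
    using based_c1_block based_P1_tail by (intro pcats_append) auto
  also have "\<dots> = (pcats (map (c1_block L) [1..<?k]) @ replicate ?k Base @ map (CV 1) [1..<L 1])
       @ cyc L 1 @ tl (pcats (P1_tail L n))"
    by (simp add: pcat_def c1_block_eq cyc_def)
  finally have "Pgen L n 1 = (pcats (map (c1_block L) [1..<?k]) @ replicate ?k Base @ map (CV 1) [1..<L 1])
       @ cyc L 1 @ tl (pcats (P1_tail L n))" .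
  moreover have "(\<Sum>j=1..n. L j) = L 1 + (\<Sum>j=2..n. L j)"
    using assms(1) by (simp add: sum.atLeast_Suc_atMost numeral_2_eq_2)
  then have "2 * L 1 + length (tl (pcats (P1_tail L n))) \<le> kseq L n"
    using length_tl_P1_tail[of n L] pos by (simp add: kseq_def sum_distrib_left)
  ultimately show ?thesis by blast
qed

lemma replicate_append_Cons: "replicate a x @ x # xs = x # replicate a x @ xs"
  by (induction a) auto

lemma Pgen_1_cyc_gap_cyc:
  assumes "1 \<le> n" "1 \<le> a" "a < kseq L n"
  shows "\<exists>xs ys. Pgen L n 1 = xs @ cyc L 1 @ replicate a Base @ cyc L 1 @ ys"
proof -
  let ?k = "kseq L n"
  let ?B = "map (c1_block L) [Suc (Suc a)..<?k + 1] @ P1_tail L n"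
  let ?c = "map (CV 1) [1..<L 1]"
  have "[1..<?k + 1] = [1..<a] @ [a..<?k + 1]"
    using upt_add_eq_append[of 1 a "?k + 1 - a"] assms by (simp del: upt_Suc)
  also have "[a..<?k + 1] = a # Suc a # [Suc (Suc a)..<?k + 1]"
    using assms by (simp add: upt_conv_Cons del: upt_Suc)
  finally have "Pgen L n 1 = pcats (map (c1_block L) [1..<a] @ (c1_block L a # c1_block L (Suc a) # ?B))"
    using Pgen_1[OF assms(1)] by (simp del: upt_Suc)
  also have "\<dots> = pcats (map (c1_block L) [1..<a]) @ tl (pcats (c1_block L a # c1_block L (Suc a) # ?B))"
    using based_c1_block based_P1_tail by (intro pcats_append) (auto simp del: upt_Suc)
  also have "\<dots> = pcats (map (c1_block L) [1..<a])
      @ tl (c1_block L a @ tl (c1_block L (Suc a) @ tl (pcats ?B)))"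
    by (simp only: pcats.simps pcat_def)
  also have "\<dots> = (pcats (map (c1_block L) [1..<a]) @ replicate a Base @ ?c)
      @ cyc L 1 @ replicate a Base @ cyc L 1 @ (?c @ [Base] @ tl (pcats ?B))"
    using assms(2) by (cases a) (simp_all add: c1_block_eq cyc_def replicate_append_Cons del: upt_Suc)
  finally show ?thesis by blast
qed

lemma clen_Suc: "clen (Suc n) i = length (P n i) - 1"
  by (simp add: P_def)

declare clen.simps(2)[simp del]

lemma clen_Suc_1_pos: "0 < clen (Suc n) 1"
proof (cases "n = 0")
  case True
  then show ?thesis by (simp add: clen_Suc P_def Pgen_def rep_loop)
next
  case False
  then obtain ys where "P n 1 = Base # cyc (clen n) 1 @ ys"
    using Pgen_1_starts_with_cyc[of n "clen n"] by (auto simp: P_def)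
  then show ?thesis by (simp add: clen_Suc cyc_def)
qed

definition walk :: "(nat \<Rightarrow> nat) \<Rightarrow> nat \<Rightarrow> vtx list \<Rightarrow> bool" where
  "walk L n q \<longleftrightarrow> (\<exists>ps. q = pcats ps \<and> (\<forall>p\<in>set ps. p = loop \<or> (\<exists>j\<in>{1..n}. p = cyc L j)))"

lemma walk_based: "walk L n q \<Longrightarrow> based q"
  unfolding walk_def using based_loop based_cyc by (auto intro!: based_pcats)

lemma walk_loop: "walk L n loop"
  unfolding walk_def by (intro exI[of _ "[loop]"]) (simp add: pcat_def loop_def)

lemma walk_cyc: "j \<in> {1..n} \<Longrightarrow> walk L n (cyc L j)"
  unfolding walk_def by (intro exI[of _ "[cyc L j]"]) (auto simp: pcat_def cyc_def)

lemma walk_pcats: "\<forall>q\<in>set qs. walk L n q \<Longrightarrow> walk L n (pcats qs)"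
proof (induction qs)
  case Nil
  show ?case unfolding walk_def by (intro exI[of _ "[]"]) simp
next
  case (Cons q qs)
  obtain ps where ps: "q = pcats ps" "\<forall>p\<in>set ps. p = loop \<or> (\<exists>j\<in>{1..n}. p = cyc L j)"
    using Cons.prems unfolding walk_def by auto
  obtain ps' where ps': "pcats qs = pcats ps'" "\<forall>p\<in>set ps'. p = loop \<or> (\<exists>j\<in>{1..n}. p = cyc L j)"
    using Cons unfolding walk_def by auto
  have "\<forall>p\<in>set (ps @ ps'). based p"
    using ps(2) ps'(2) based_loop based_cyc by auto
  then show ?case unfolding walk_def using ps ps'
    by (intro exI[of _ "ps @ ps'"]) (auto simp: pcat_pcats)
qed

lemma walk_pcat: "walk L n q \<Longrightarrow> walk L n q' \<Longrightarrow> walk L n (pcat q q')"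
  using walk_pcats[of "[q, q']"] by (simp add: pcat_def)

lemma walk_rep: "walk L n c \<Longrightarrow> walk L n (rep a c)"
  by (simp add: rep_eq_pcats walk_pcats)

lemma rep_Suc_loop: "rep (Suc a) loop = rep a loop @ [Base]"
  by (simp add: rep_loop del: replicate_Suc) (simp add: replicate_append_same)

lemma pcats_snoc_loop:
  assumes "\<forall>q\<in>set qs. walk L n q"
  shows "pcats (qs @ [loop]) = pcats qs @ [Base]"
  using assms walk_based based_loop
  by (subst pcats_append) (auto simp: pcat_def loop_def)

lemma Pgen_ends_with_loop:
  assumes "1 \<le> i" "i \<le> Suc n" and "1 \<le> n \<Longrightarrow> 0 < L 1"
  shows "\<exists>q. Pgen L n i = q @ [Base] \<and> walk L n q"
proof -
  have rep2: "j \<in> {1..n} \<Longrightarrow> walk L n (rep 2 (cyc L j))" for j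
    by (intro walk_rep walk_cyc)
  consider "n = 0" | "1 \<le> n" "i = 1" | "1 \<le> n" "i = Suc n" | "2 \<le> i" "i \<le> n"
    using assms(1,2) by linarith
  then show ?thesis
  proof cases
    case 1
    then have "Pgen L n i = rep 9 loop @ [Base]"
      using rep_Suc_loop[of 9] by (simp add: Pgen_def numeral_eq_Suc)
    then show ?thesis using walk_rep walk_loop by blast
  next
    case 2
    let ?qs = "map (c1_block L) [1..<kseq L n + 1] @ [loop] @ map (\<lambda>j. rep 2 (cyc L j)) [2..<n+1]"
    have "walk L n (c1_block L a)" for a
      unfolding c1_block_def using 2 rep2[of 1] by (simp add: walk_pcat walk_rep walk_loop)
    then have "\<forall>q\<in>set ?qs. walk L n q"
      using 2 rep2 walk_loop by (auto simp del: upt_Suc)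
    moreover have "Pgen L n i = pcats (?qs @ [loop])"
      using 2 Pgen_1[of n L] by (simp add: P1_tail_def del: upt_Suc)
    ultimately show ?thesis using pcats_snoc_loop[of ?qs] walk_pcats[of ?qs] by auto
  next
    case 3
    have "L 1 \<le> (\<Sum>j=1..n. L j)" using 3 by (intro member_le_sum) auto
    then have "0 < (n + 2)^2 * (\<Sum>j=1..n. L j)" using 3 assms(3) by simp
    then obtain N where "(n + 2)^2 * (\<Sum>j=1..n. L j) = Suc N"
      using gr0_conv_Suc by blast
    then have "Pgen L n i = rep N loop @ [Base]"
      using 3 rep_Suc_loop[of N] by (simp add: Pgen_def)
    then show ?thesis using walk_rep walk_loop by blast
  next
    case 4
    let ?qs = "[loop] @ map (\<lambda>j. rep 2 (cyc L j)) [i..<n+1]"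
    have "\<forall>q\<in>set ?qs. walk L n q"
      using 4 rep2 walk_loop by (auto simp del: upt_Suc)
    moreover have "Pgen L n i = pcats (?qs @ [loop])"
      using 4 by (simp add: Pgen_def del: upt_Suc)
    ultimately show ?thesis using pcats_snoc_loop[of ?qs] walk_pcats[of ?qs] by auto
  qed
qed

lemma P_ends_with_loop:
  "1 \<le> i \<Longrightarrow> i \<le> Suc n \<Longrightarrow> \<exists>q. P n i = q @ [Base] \<and> walk (clen n) n q"
  unfolding P_def using clen_Suc_1_pos by (intro Pgen_ends_with_loop) (auto dest: Suc_le_D)

abbreviation edge :: "nat \<Rightarrow> vtx \<Rightarrow> vtx \<Rightarrow> bool" where
  "edge n a b \<equiv> (a, b) \<in> E n"

lemma Base_in_V: "Base \<in> V n"
  by (simp add: V_def)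

lemma Base_edge: "edge n Base Base"
  by (simp add: E_def)

lemma in_set_zip_tl:
  "(a, b) \<in> set (zip xs (tl xs)) \<longleftrightarrow> (\<exists>t. Suc t < length xs \<and> a = xs ! t \<and> b = xs ! Suc t)"
  by (auto simp: in_set_zip nth_tl)
     (metis Suc_less_eq length_tl less_diff_conv nth_tl add_Suc_right add_0_right)

lemma edge_iff: "edge n a b \<longleftrightarrow> (a, b) = (Base, Base) \<or>
   (\<exists>i t. 1 \<le> i \<and> i \<le> n \<and> Suc t < length (cyc (clen n) i) \<and>
       a = cyc (clen n) i ! t \<and> b = cyc (clen n) i ! Suc t)"
  unfolding E_def by (auto simp: in_set_zip_tl)

lemma set_cyc_in_V: "j \<in> {1..n} \<Longrightarrow> set (cyc (clen n) j) \<subseteq> V n"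
  by (auto simp: cyc_def V_def)

lemma walk_in_V: "walk (clen n) n q \<Longrightarrow> set q \<subseteq> V n"
proof -
  assume "walk (clen n) n q"
  then obtain ps where ps: "q = pcats ps" "\<forall>p\<in>set ps. p = loop \<or> (\<exists>j\<in>{1..n}. p = cyc (clen n) j)"
    unfolding walk_def by blast
  have "set p \<subseteq> V n" if "p \<in> set ps" for p
  proof -
    from ps(2) that consider "p = loop" | j where "j \<in> {1..n}" "p = cyc (clen n) j" by blast
    then show ?thesis using set_cyc_in_V Base_in_V[of n] by cases (auto simp: loop_def)
  qed
  then show ?thesis using set_pcats[of ps] Base_in_V[of n] unfolding ps(1) by blast
qed

lemma walk_is_path: "walk (clen n) n q \<Longrightarrow> successively (edge n) q"
proof -
  assume "walk (clen n) n q"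
  then obtain ps where ps: "q = pcats ps" "\<forall>p\<in>set ps. p = loop \<or> (\<exists>j\<in>{1..n}. p = cyc (clen n) j)"
    unfolding walk_def by blast
  have "successively (edge n) (cyc (clen n) j)" if "j \<in> {1..n}" for j
    using that unfolding successively_conv_nth edge_iff by auto
  then have "\<forall>p\<in>set ps. based p \<and> successively (edge n) p"
    using ps(2) based_loop based_cyc by (auto simp: loop_def Base_edge)
  then show ?thesis unfolding ps(1) by (intro successively_pcats Base_edge)
qed

lemma P_in_V: "1 \<le> i \<Longrightarrow> i \<le> Suc n \<Longrightarrow> set (P n i) \<subseteq> V n"
proof -
  assume "1 \<le> i" "i \<le> Suc n"
  then obtain q where "P n i = q @ [Base]" "walk (clen n) n q"
    using P_ends_with_loop by blast
  then show ?thesis using walk_in_V[of n q] Base_in_V[of n] by simp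
qed

lemma P_is_path: "1 \<le> i \<Longrightarrow> i \<le> Suc n \<Longrightarrow> successively (edge n) (P n i)"
proof -
  assume "1 \<le> i" "i \<le> Suc n"
  then obtain q where q: "P n i = q @ [Base]" "walk (clen n) n q"
    using P_ends_with_loop by blast
  then have "q \<noteq> []" "last q = Base" using walk_based by (auto simp: based_def)
  then show ?thesis using q walk_is_path by (simp add: successively_append_iff Base_edge)
qed

lemma length_P: "1 \<le> i \<Longrightarrow> i \<le> Suc n \<Longrightarrow> 2 \<le> length (P n i)"
proof -
  assume "1 \<le> i" "i \<le> Suc n"
  then obtain q where "P n i = q @ [Base]" "based q"
    using P_ends_with_loop walk_based by blast
  then show ?thesis by (cases q) (auto simp: based_def)
qed

lemma nth_P_Base:
  assumes "1 \<le> i" "i \<le> Suc n" "t = 0 \<or> t + 2 = length (P n i) \<or> t + 1 = length (P n i)"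
  shows "P n i ! t = Base"
proof -
  obtain q where q: "P n i = q @ [Base]" "based q"
    using P_ends_with_loop[OF assms(1,2)] walk_based by blast
  then have ne: "q \<noteq> []" by (simp add: based_def)
  have h0: "q ! 0 = Base" using q(2) ne by (simp add: based_def hd_conv_nth)
  have h1: "q ! (length q - 1) = Base" using q(2) ne by (simp add: based_def last_conv_nth)
  have "t = 0 \<or> t = length q - 1 \<or> t = length q"
    using assms(3) q(1) by auto
  then show ?thesis
  proof (elim disjE)
    assume "t = length q - 1"
    then show ?thesis using h1 ne q(1) by (simp add: nth_append)
  qed (use h0 ne q(1) in \<open>simp_all add: nth_append\<close>)
qed

lemma phi_in_V: "v \<in> V (Suc n) \<Longrightarrow> phi n v \<in> V n"
proof (cases v)
  case (CV i j)
  assume "v \<in> V (Suc n)"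
  with CV have "1 \<le> i" "i \<le> Suc n" "j < length (P n i)" by (auto simp: V_def clen_Suc)
  then show ?thesis using CV P_in_V nth_mem by fastforce
qed (simp add: Base_in_V)

lemma phi_nth_cyc:
  assumes "1 \<le> i" "i \<le> Suc n" "t < length (cyc (clen (Suc n)) i)"
  shows "phi n (cyc (clen (Suc n)) i ! t) = P n i ! t"
proof (cases "0 < t \<and> t < clen (Suc n) i")
  case True
  then show ?thesis using assms by (simp add: nth_cyc)
next
  case False
  have "length (cyc (clen (Suc n)) i) = length (P n i)"
    using length_P[OF assms(1,2)] by (simp add: length_cyc clen_Suc)
  then have "t = 0 \<or> t + 1 = length (P n i)"
    using False assms(3) by (auto simp: clen_Suc)
  then have "P n i ! t = Base" using nth_P_Base[OF assms(1,2)] by blast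
  then show ?thesis using False assms(3) by (simp add: nth_cyc)
qed

lemma phi_edge: "edge (Suc n) a b \<Longrightarrow> edge n (phi n a) (phi n b)"
proof -
  assume "edge (Suc n) a b"
  then consider "a = Base" "b = Base"
    | i t where "1 \<le> i" "i \<le> Suc n" "Suc t < length (cyc (clen (Suc n)) i)"
       "a = cyc (clen (Suc n)) i ! t" "b = cyc (clen (Suc n)) i ! Suc t"
    unfolding edge_iff by auto
  then show ?thesis
  proof cases
    case 1
    then show ?thesis by (simp add: Base_edge)
  next
    case 2
    have "length (cyc (clen (Suc n)) i) = length (P n i)"
      using length_P[OF 2(1,2)] by (simp add: length_cyc clen_Suc)
    then show ?thesis using 2 phi_nth_cyc[OF 2(1,2)] P_is_path[OF 2(1,2)]
      by (simp add: successively_conv_nth)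
  qed
qed

definition next_vtx :: "nat \<Rightarrow> vtx \<Rightarrow> vtx" where
  "next_vtx n v = (case v of Base \<Rightarrow> Base | CV i j \<Rightarrow> if Suc j < clen n i then CV i (Suc j) else Base)"

lemma next_vtx_in_V: "v \<in> V n \<Longrightarrow> next_vtx n v \<in> V n"
  by (auto simp: V_def next_vtx_def)

lemma edge_from_CV_iff:
  assumes "CV i j \<in> V n"
  shows "edge n (CV i j) b \<longleftrightarrow> b = next_vtx n (CV i j)"
proof -
  from assms have ij: "1 \<le> i" "i \<le> n" "0 < j" "j < clen n i" by (auto simp: V_def)
  show ?thesis
  proof
    assume "edge n (CV i j) b"
    then obtain i' t where it: "1 \<le> i'" "Suc t < length (cyc (clen n) i')"
      "CV i j = cyc (clen n) i' ! t" "b = cyc (clen n) i' ! Suc t"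
      unfolding edge_iff by auto
    then have "i' = i \<and> t = j" by (auto simp: nth_cyc split: if_splits)
    then show "b = next_vtx n (CV i j)" using it ij by (simp add: nth_cyc length_cyc next_vtx_def)
  next
    assume "b = next_vtx n (CV i j)"
    then show "edge n (CV i j) b" unfolding edge_iff using ij
      by (intro disjI2 exI[of _ i] exI[of _ j]) (simp add: nth_cyc length_cyc next_vtx_def)
  qed
qed

text \<open>Consecutive vertices of \<open>c_{n+1,i}\<close> lie over consecutive vertices of the path \<open>P n i\<close>,
  except that the last one lies over the \<open>Base\<close> before the closing loop; the hypothesis
  \<open>phi n v \<noteq> Base\<close> excludes that case.\<close>

lemma phi_next_vtx:
  assumes v: "v \<in> V (Suc n)" and nb: "phi n v \<noteq> Base"
  shows "phi n (next_vtx (Suc n) v) = next_vtx n (phi n v)"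
proof (cases v)
  case Base
  then show ?thesis using nb by simp
next
  case (CV i j)
  with v have ij: "1 \<le> i" "i \<le> Suc n" "j < clen (Suc n) i" by (auto simp: V_def)
  have len: "clen (Suc n) i = length (P n i) - 1" by (rule clen_Suc)
  have w: "phi n v = P n i ! j" using CV by simp
  show ?thesis
  proof (cases "Suc j < clen (Suc n) i")
    case True
    then have e: "edge n (P n i ! j) (P n i ! Suc j)"
      using P_is_path[OF ij(1,2)] len by (simp add: successively_conv_nth)
    obtain a b where ab: "P n i ! j = CV a b" using nb w by (cases "P n i ! j") auto
    have "CV a b \<in> V n" using P_in_V[OF ij(1,2)] ij(3) len ab[symmetric] by (auto intro: nth_mem)
    then have "P n i ! Suc j = next_vtx n (P n i ! j)" using edge_from_CV_iff e ab by simp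
    then show ?thesis using True CV by (simp add: next_vtx_def)
  next
    case False
    then have "j + 2 = length (P n i)" using ij len by linarith
    then show ?thesis using w nb nth_P_Base[OF ij(1,2)] by simp
  qed
qed

section \<open>The inverse limit \<open>X\<close> and the map \<open>T\<close>\<close>

primrec proj :: "nat \<Rightarrow> nat \<Rightarrow> vtx \<Rightarrow> vtx" where
  "proj k 0 v = v"
| "proj k (Suc d) v = proj k d (phi (k + d) v)"

lemma proj_Suc: "proj k (Suc d) v = phi k (proj (Suc k) d v)"
  by (induction d arbitrary: v) simp_all

lemma proj_in_V: "v \<in> V (k + d) \<Longrightarrow> proj k d v \<in> V k"
  by (induction d arbitrary: v) (simp_all add: phi_in_V)

lemma proj_edge: "edge (k + d) a b \<Longrightarrow> edge k (proj k d a) (proj k d b)"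
  by (induction d arbitrary: a b) (simp_all add: phi_edge)

lemma Xsp_in_V: "x \<in> Xsp \<Longrightarrow> x n \<in> V n"
  by (simp add: Xsp_def)

lemma phi_Xsp: "x \<in> Xsp \<Longrightarrow> phi n (x (Suc n)) = x n"
  by (simp add: Xsp_def)

lemma proj_Xsp: "x \<in> Xsp \<Longrightarrow> proj k d (x (k + d)) = x k"
  by (induction d) (simp_all add: phi_Xsp)

lemma proj_Xsp_le: "x \<in> Xsp \<Longrightarrow> k \<le> M \<Longrightarrow> proj k (M - k) (x M) = x k"
  using proj_Xsp[of x k "M - k"] by simp

lemma Xsp_eq_below: "x \<in> Xsp \<Longrightarrow> y \<in> Xsp \<Longrightarrow> x M = y M \<Longrightarrow> k \<le> M \<Longrightarrow> x k = y k"
  by (metis proj_Xsp_le)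

lemma Xsp_edge_below:
  "x \<in> Xsp \<Longrightarrow> y \<in> Xsp \<Longrightarrow> edge M (x M) (y M) \<Longrightarrow> k \<le> M \<Longrightarrow> edge k (x k) (y k)"
  using proj_edge[where k=k and d="M - k" and a="x M" and b="y M"] by (simp add: proj_Xsp_le)

lemma Xsp_nonBase_above:
  assumes "x \<in> Xsp" "x M \<noteq> Base" "M \<le> n"
  shows "x n \<noteq> Base"
  using assms(3)
proof (induction n rule: dec_induct)
  case (step n)
  then show ?case using phi_Xsp[OF assms(1), of n] by auto
qed (rule assms(2))

text \<open>Once \<open>z M \<noteq> Base\<close>, all higher coordinates of \<open>z\<close> lie inside cycles and have a unique
  successor; the lower coordinates of the image are then forced by coherence.\<close>

definition succ_point :: "nat \<Rightarrow> (nat \<Rightarrow> vtx) \<Rightarrow> nat \<Rightarrow> vtx" where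
  "succ_point M z n =
     (if M \<le> n then next_vtx n (z n) else proj n (M - n) (next_vtx M (z M)))"

lemma succ_point_below:
  "k \<le> M \<Longrightarrow> succ_point M z k = proj k (M - k) (next_vtx M (z M))"
  by (cases "k = M") (simp_all add: succ_point_def)

lemma succ_point_in_Xsp:
  assumes z: "z \<in> Xsp" and nb: "z M \<noteq> Base"
  shows "succ_point M z \<in> Xsp"
proof -
  have "succ_point M z n \<in> V n" for n
    using Xsp_in_V[OF z] next_vtx_in_V proj_in_V[of "next_vtx M (z M)" n "M - n"]
    by (auto simp: succ_point_def)
  moreover have "phi n (succ_point M z (Suc n)) = succ_point M z n" for n
  proof (cases "M \<le> n")
    case True
    then have "phi n (z (Suc n)) \<noteq> Base"
      using phi_Xsp[OF z] Xsp_nonBase_above[OF z nb] by simp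
    then show ?thesis using True phi_next_vtx[of "z (Suc n)" n] Xsp_in_V[OF z] phi_Xsp[OF z]
      by (simp add: succ_point_def)
  next
    case False
    then show ?thesis using proj_Suc[of n "M - Suc n"] succ_point_below[of n M z]
      succ_point_below[of "Suc n" M z] by (simp add: Suc_diff_Suc)
  qed
  ultimately show ?thesis by (simp add: Xsp_def)
qed

lemma edge_succ_point:
  assumes z: "z \<in> Xsp" and nb: "z M \<noteq> Base" and "M \<le> n"
  shows "edge n (z n) (succ_point M z n)"
proof -
  obtain i j where "z n = CV i j" using Xsp_nonBase_above[OF z nb \<open>M \<le> n\<close>] by (cases "z n") auto
  then show ?thesis using edge_from_CV_iff[of i j n] Xsp_in_V[OF z, of n] \<open>M \<le> n\<close>
    by (simp add: succ_point_def)
qed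

lemma T_eq_succ_point:
  assumes z: "z \<in> Xsp" and nb: "z M \<noteq> Base"
  shows "T z = succ_point M z"
  unfolding T_def
proof (rule the_equality)
  let ?s = "succ_point M z"
  have "edge n (z n) (?s n)" for n
    using Xsp_edge_below[OF z succ_point_in_Xsp[OF z nb] edge_succ_point[OF z nb order.refl]]
      edge_succ_point[OF z nb] by (cases "M \<le> n") auto
  then show "?s \<in> Xsp \<and> (\<forall>n. edge n (z n) (?s n))"
    using succ_point_in_Xsp[OF z nb] by blast
next
  fix y assume y: "y \<in> Xsp \<and> (\<forall>n. edge n (z n) (y n))"
  have above: "y n = succ_point M z n" if Mn: "M \<le> n" for n
  proof -
    obtain i j where "z n = CV i j" using Xsp_nonBase_above[OF z nb Mn] by (cases "z n") auto
    moreover have "edge n (z n) (y n)" using y by blast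
    ultimately show ?thesis using edge_from_CV_iff[of i j n] Xsp_in_V[OF z, of n] Mn
      by (simp add: succ_point_def)
  qed
  show "y = succ_point M z"
  proof
    fix n
    show "y n = succ_point M z n"
    proof (cases "M \<le> n")
      case False
      then have "y n = proj n (M - n) (y M)" using y proj_Xsp_le[of y n M] by simp
      then show ?thesis using above[of M] False by (simp add: succ_point_def)
    qed (rule above)
  qed
qed

lemma T_pow_along_cycle:
  assumes z: "z \<in> Xsp" and zM: "z M = CV i j" and "j + k < clen M i"
  shows "(T ^^ k) z \<in> Xsp \<and> (T ^^ k) z M = CV i (j + k)"
  using assms(3)
proof (induction k)
  case 0
  then show ?case using z zM by simp
next
  case (Suc k)
  then have IH: "(T ^^ k) z \<in> Xsp" "(T ^^ k) z M = CV i (j + k)" by auto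
  then have "T ((T ^^ k) z) = succ_point M ((T ^^ k) z)" by (intro T_eq_succ_point) auto
  moreover have "succ_point M ((T ^^ k) z) \<in> Xsp" using IH by (intro succ_point_in_Xsp) auto
  moreover have "succ_point M ((T ^^ k) z) M = CV i (j + Suc k)"
    using IH Suc.prems by (simp add: succ_point_def next_vtx_def)
  ultimately show ?case by simp
qed

lemma clen_pos: "1 \<le> j \<Longrightarrow> j \<le> n \<Longrightarrow> 0 < clen n j"
  using length_P[of j "n - 1"] by (cases n) (auto simp: clen_Suc)

lemma P_1_starts_with_cyc: "1 \<le> n \<Longrightarrow> \<exists>ys. P n 1 = Base # cyc (clen n) 1 @ ys"
  unfolding P_def by (rule Pgen_1_starts_with_cyc)

lemma P_1_covers_V:
  assumes "1 \<le> n" "v \<in> V n"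
  shows "\<exists>j. 0 < j \<and> j < clen (Suc n) 1 \<and> P n 1 ! j = v"
proof (cases v)
  case Base
  obtain ys where "P n 1 = Base # cyc (clen n) 1 @ ys"
    using P_1_starts_with_cyc[OF assms(1)] by blast
  then show ?thesis using Base by (intro exI[of _ 1]) (auto simp: clen_Suc cyc_def)
next
  case (CV s r)
  with assms have sr: "1 \<le> s" "s \<le> n" "0 < r" "r < clen n s" by (auto simp: V_def)
  let ?ps = "map (c1_block (clen n)) [1..<kseq (clen n) n + 1] @ P1_tail (clen n) n"
  have "v \<in> set (P n 1)"
  proof (cases "s = 1")
    case True
    then have "v \<in> set (cyc (clen n) 1)" using sr CV by (auto simp: cyc_def)
    moreover obtain ys where "P n 1 = Base # cyc (clen n) 1 @ ys"
      using P_1_starts_with_cyc[OF assms(1)] by blast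
    ultimately show ?thesis by simp
  next
    case False
    then have "rep 2 (cyc (clen n) s) \<in> set ?ps"
      using sr by (auto simp: P1_tail_def simp del: upt_Suc)
    moreover have "v \<in> set (rep 2 (cyc (clen n) s))" using sr CV by (auto simp: rep_2 cyc_def)
    moreover have "\<forall>q\<in>set ?ps. based q"
      using based_c1_block based_P1_tail by (auto simp del: upt_Suc)
    ultimately have "v \<in> set (pcats ?ps)" using in_set_pcats CV by blast
    then show ?thesis using Pgen_1[OF assms(1)] by (simp add: P_def)
  qed
  then obtain j where j: "j < length (P n 1)" "P n 1 ! j = v" by (auto simp: in_set_conv_nth)
  moreover have "P n 1 ! j \<noteq> Base" using j(2) CV by simp
  then have "j \<noteq> 0" "j + 1 \<noteq> length (P n 1)"
    using nth_P_Base[of 1 n j] by fastforce+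
  ultimately show ?thesis unfolding clen_Suc by (intro exI[of _ j]) auto
qed

lemma clen_1_Suc: "1 \<le> n \<Longrightarrow> Suc (clen n 1) \<le> clen (Suc n) 1"
  using P_1_starts_with_cyc[of n] clen_pos[of 1 n] by (auto simp: clen_Suc length_cyc)

lemma clen_1_add:
  assumes "1 \<le> M" "M \<le> k"
  shows "clen M 1 + (k - M) \<le> clen k 1"
  using assms(2)
proof (induction k rule: dec_induct)
  case (step k)
  then show ?case using clen_1_Suc[of k] assms(1) by (simp add: Suc_diff_le)
qed simp

lemma phi_CV_1_Suc:
  assumes "1 \<le> n" "0 < r" "r < clen n 1"
  shows "phi n (CV 1 (Suc r)) = CV 1 r"
proof -
  obtain ys where "P n 1 = Base # cyc (clen n) 1 @ ys" using P_1_starts_with_cyc[OF assms(1)] by blast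
  then show ?thesis using assms by (simp add: nth_append nth_cyc length_cyc)
qed

lemma Xsp_through_CV_1:
  assumes M: "1 \<le> M" and j: "0 < j" "j < clen M 1"
  shows "\<exists>z\<in>Xsp. z M = CV 1 j"
proof -
  define z where "z k = (if k \<le> M then proj k (M - k) (CV 1 j) else CV 1 (j + (k - M)))" for k
  have above: "z k = CV 1 (j + (k - M))" "j + (k - M) < clen k 1" if "M \<le> k" for k
    using that clen_1_add[OF M that] j by (cases "k = M"; simp add: z_def)+
  have "CV 1 j \<in> V M" using M j by (simp add: V_def)
  then have "z k \<in> V k" for k
    using proj_in_V[of "CV 1 j" k "M - k"] above[of k] M j by (cases "k \<le> M") (auto simp: z_def V_def)
  moreover have "phi k (z (Suc k)) = z k" for k
  proof (cases "M \<le> k")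
    case True
    then show ?thesis using above[of k] above[of "Suc k"] phi_CV_1_Suc[of k "j + (k - M)"] M j
      by (simp add: Suc_diff_le)
  next
    case False
    then show ?thesis using proj_Suc[of k "M - Suc k" "CV 1 j"]
      by (simp add: z_def Suc_diff_Suc)
  qed
  ultimately have "z \<in> Xsp" by (simp add: Xsp_def)
  moreover have "z M = CV 1 j" by (simp add: z_def)
  ultimately show ?thesis by blast
qed

section \<open>Pairs of hits and the mixing times\<close>

definition hits :: "nat \<Rightarrow> nat \<Rightarrow> vtx \<Rightarrow> nat \<Rightarrow> bool" where
  "hits m K v r \<longleftrightarrow> 0 < r \<and> r < clen K 1 \<and> proj m (K - m) (CV 1 r) = v"

lemma hits_shift:
  assumes "m \<le> K" "1 \<le> K" "P K 1 = xs @ cyc (clen K) 1 @ ys" "hits m K v r"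
  shows "hits m (Suc K) v (length xs + r)"
proof -
  have lc: "length (cyc (clen K) 1) = clen K 1 + 1"
    using clen_pos[of 1 K] assms(2) by (simp add: length_cyc)
  have r: "0 < r" "r < clen K 1" "proj m (K - m) (CV 1 r) = v"
    using assms(4) by (auto simp: hits_def)
  have "phi K (CV 1 (length xs + r)) = cyc (clen K) 1 ! r"
    using assms(3) r lc by (simp add: nth_append)
  also have "\<dots> = CV 1 r" using r lc by (simp add: nth_cyc)
  finally have "proj m (Suc K - m) (CV 1 (length xs + r)) = v"
    using assms(1) r(3) by (simp add: Suc_diff_le)
  moreover have "clen (Suc K) 1 = length xs + clen K 1 + length ys"
    using assms(3) lc by (simp add: clen_Suc)
  ultimately show ?thesis using r by (simp add: hits_def)
qed

lemma hits_Suc: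
  assumes "m \<le> K" "1 \<le> K" "hits m K v r"
  shows "hits m (Suc K) v (Suc r)"
proof -
  obtain ys where "P K 1 = [Base] @ cyc (clen K) 1 @ ys"
    using P_1_starts_with_cyc[OF assms(2)] by auto
  from hits_shift[OF assms(1,2) this assms(3)] show ?thesis by simp
qed

lemma hits_exists:
  assumes "1 \<le> m" "v \<in> V m" "Suc m \<le> K"
  shows "\<exists>r. hits m K v r"
  using assms(3)
proof (induction K rule: dec_induct)
  case base
  show ?case using P_1_covers_V[OF assms(1,2)] by (auto simp: hits_def)
next
  case (step K)
  then show ?case using hits_Suc[of m K v] assms(1) by auto
qed

definition hit_after :: "nat \<Rightarrow> vtx \<Rightarrow> vtx \<Rightarrow> nat \<Rightarrow> bool" where
  "hit_after m u w n \<longleftrightarrow> (\<exists>M j. m \<le> M \<and> 1 \<le> M \<and> hits m M u j \<and> hits m M w (j + n))"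

lemma hit_after_interval:
  assumes m: "1 \<le> m" and u: "u \<in> V m" and w: "w \<in> V m" and K: "Suc m \<le> K"
  shows "\<exists>D. 1 \<le> D \<and> D \<le> kseq (clen K) K \<and>
     (\<forall>a. 1 \<le> a \<longrightarrow> a < kseq (clen (Suc K)) (Suc K) \<longrightarrow> hit_after m u w (D + a))"
proof -
  obtain p q where p: "hits m K u p" and q: "hits m K w q"
    using hits_exists[OF m u K] hits_exists[OF m w K] by blast
  have K1: "1 \<le> K" "m \<le> K" using K m by auto
  have "1 \<le> clen K j" if "1 \<le> j" "j \<le> K" for j
    using clen_pos[OF that] by simp
  then obtain xs ys where xy: "P K 1 = xs @ cyc (clen K) 1 @ ys" "2 * clen K 1 + length ys \<le> kseq (clen K) K"
    using Pgen_1_last_cyc[OF K1(1), of "clen K"] by (auto simp: P_def)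
  define u' where "u' = length xs + p"
  have hu: "hits m (Suc K) u u'" unfolding u'_def by (rule hits_shift[OF K1(2,1) xy(1) p])
  have hw: "hits m (Suc K) w (Suc q)" by (rule hits_Suc[OF K1(2,1) q])
  have "clen (Suc K) 1 = length xs + clen K 1 + length ys"
    using xy(1) clen_pos[of 1 K] K1 by (simp add: clen_Suc length_cyc)
  \<comment> \<open>In \<open>c_{K+1,1}\<close>, \<open>u\<close> is hit at \<open>u'\<close> (last copy of \<open>c_{K,1}\<close>) and \<open>w\<close> at \<open>q + 1\<close>
    (first copy); two copies of \<open>c_{K+1,1}\<close> separated by \<open>a\<close> loops put them \<open>D + a\<close> apart.\<close>
  define D where "D = clen (Suc K) 1 - u' + 1 + Suc q"
  then have D: "1 \<le> D" "D \<le> kseq (clen K) K"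
    using xy(2) \<open>clen (Suc K) 1 = _\<close> p q unfolding u'_def hits_def by linarith+
  have "hit_after m u w (D + a)" if a: "1 \<le> a" "a < kseq (clen (Suc K)) (Suc K)" for a
  proof -
    let ?c = "cyc (clen (Suc K)) 1"
    obtain xs' ys' where xy': "P (Suc K) 1 = xs' @ ?c @ replicate a Base @ ?c @ ys'"
      using Pgen_1_cyc_gap_cyc[of "Suc K" a "clen (Suc K)"] a by (auto simp: P_def)
    have hu': "hits m (Suc (Suc K)) u (length xs' + u')"
      using xy' K1 by (intro hits_shift[OF _ _ _ hu, of xs' "replicate a Base @ ?c @ ys'"]) auto
    have "hits m (Suc (Suc K)) w (length (xs' @ ?c @ replicate a Base) + Suc q)"
      using xy' K1 by (intro hits_shift[OF _ _ _ hw, of _ ys']) auto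
    moreover have "length (xs' @ ?c @ replicate a Base) + Suc q = (length xs' + u') + (D + a)"
      using clen_pos[of 1 "Suc K"] hu by (simp add: length_cyc D_def hits_def)
    ultimately have "hits m (Suc (Suc K)) w ((length xs' + u') + (D + a))" by metis
    moreover have "m \<le> Suc (Suc K)" "1 \<le> Suc (Suc K)" using K1 by auto
    ultimately show ?thesis using hu' unfolding hit_after_def by blast
  qed
  then show ?thesis using D by blast
qed

lemma chained_intervals_cover:
  fixes lo hi :: "nat \<Rightarrow> nat"
  assumes chain: "\<And>K. K0 \<le> K \<Longrightarrow> lo (Suc K) \<le> hi K"
    and unbounded: "\<And>n. \<exists>K\<ge>K0. n < hi K"
    and covered: "\<And>K n. K0 \<le> K \<Longrightarrow> lo K \<le> n \<Longrightarrow> n < hi K \<Longrightarrow> S n"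
    and n: "lo K0 \<le> n"
  shows "S n"
proof -
  have "\<forall>n. lo K0 \<le> n \<longrightarrow> n < hi K \<longrightarrow> S n" if "K0 \<le> K" for K
    using that
  proof (induction K rule: dec_induct)
    case base
    then show ?case using covered by blast
  next
    case (step K)
    show ?case
    proof (intro allI impI)
      fix n assume "lo K0 \<le> n" "n < hi (Suc K)"
      then show "S n"
        using step chain[OF step.hyps(1)] covered[of "Suc K" n] by (cases "n < hi K") auto
    qed
  qed
  then show ?thesis using unbounded[of n] n by blast
qed

lemma hit_after_eventually:
  assumes "1 \<le> m" "u \<in> V m" "w \<in> V m"
  shows "\<exists>N. \<forall>n\<ge>N. hit_after m u w n"
proof -
  obtain D where D: "\<And>K. Suc m \<le> K \<Longrightarrow> 1 \<le> D K \<and> D K \<le> kseq (clen K) K \<and>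
     (\<forall>a. 1 \<le> a \<longrightarrow> a < kseq (clen (Suc K)) (Suc K) \<longrightarrow> hit_after m u w (D K + a))"
    using hit_after_interval[OF assms] by metis
  let ?hi = "\<lambda>K. D K + kseq (clen (Suc K)) (Suc K)"
  have "hit_after m u w n" if "D (Suc m) + 1 \<le> n" for n
  proof (rule chained_intervals_cover[of "Suc m" "\<lambda>K. D K + 1" ?hi])
    show "D (Suc K) + 1 \<le> ?hi K" if "Suc m \<le> K" for K
      using D[OF that] D[OF le_SucI[OF that]] by auto
    show "\<exists>K\<ge>Suc m. n < ?hi K" for n
    proof (intro exI conjI)
      have "clen 1 1 + (Suc m + n) \<le> clen (Suc (Suc m + n)) 1"
        using clen_1_add[of 1 "Suc (Suc m + n)"] by simp
      then show "n < ?hi (Suc m + n)"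
        using kseq_ge[of "Suc (Suc m + n)" "clen (Suc (Suc m + n))"] by simp
    qed simp
    show "hit_after m u w n" if "Suc m \<le> K" "D K + 1 \<le> n" "n < ?hi K" for K n
    proof -
      have "1 \<le> n - D K" "n - D K < kseq (clen (Suc K)) (Suc K)" using that(2,3) by linarith+
      then have "hit_after m u w (D K + (n - D K))" using D[OF that(1)] by blast
      then show ?thesis using that(2) by simp
    qed
  qed (rule that)
  then show ?thesis by blast
qed

lemma hit_after_orbit:
  assumes "hit_after m u w n"
  shows "\<exists>z\<in>Xsp. z m = u \<and> (T ^^ n) z \<in> Xsp \<and> (T ^^ n) z m = w"
proof -
  obtain M j where M: "m \<le> M" "1 \<le> M" "hits m M u j" "hits m M w (j + n)"
    using assms unfolding hit_after_def by blast
  then obtain z where z: "z \<in> Xsp" "z M = CV 1 j"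
    using Xsp_through_CV_1[OF M(2), of j] by (auto simp: hits_def)
  have Tz: "(T ^^ n) z \<in> Xsp" "(T ^^ n) z M = CV 1 (j + n)"
    using T_pow_along_cycle[OF z] M(4) by (auto simp: hits_def)
  have "z m = u" using proj_Xsp_le[OF z(1) M(1)] z(2) M(3) by (simp add: hits_def)
  moreover have "(T ^^ n) z m = w" using proj_Xsp_le[OF Tz(1) M(1)] Tz(2) M(4) by (simp add: hits_def)
  ultimately show ?thesis using z(1) Tz(1) by blast
qed

lemma open_X_contains_cylinder:
  assumes "open_X U" "x \<in> U"
  shows "\<exists>m0. \<forall>m\<ge>m0. \<forall>y\<in>Xsp. y m = x m \<longrightarrow> y \<in> U"
proof -
  obtain e where e: "e > 0" "\<forall>y\<in>Xsp. dist_X x y < e \<longrightarrow> y \<in> U"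
    using assms unfolding open_X_def by blast
  obtain m0 where "(1/2::real) ^ m0 < e" using real_arch_pow_inv[OF e(1), of "1/2"] by auto
  then have m0: "inverse ((2::real) ^ m0) < e" by (simp add: power_one_over inverse_eq_divide)
  have "y \<in> U" if m: "m0 \<le> m" and y: "y \<in> Xsp" "y m = x m" for m y
  proof (cases "x = y")
    case False
    define l where "l = (LEAST i. x i \<noteq> y i)"
    have "\<exists>i. x i \<noteq> y i" using False by auto
    then have l: "x l \<noteq> y l" unfolding l_def by (rule LeastI_ex)
    have "x \<in> Xsp" using assms unfolding open_X_def by blast
    then have "\<not> l \<le> m" using Xsp_eq_below[of x y m l] y(1) y(2)[symmetric] l by blast
    then have "m < l" by simp
    have "dist_X x y = inverse (2 ^ l)"
      using False by (simp add: dist_X_def l_def powr_minus powr_realpow)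
    also have "\<dots> \<le> inverse (2 ^ m0)" using \<open>m < l\<close> m by (simp add: le_imp_inverse_le)
    finally show ?thesis using e y m0 by auto
  qed (use assms(2) in simp)
  then show ?thesis by blast
qed

theorem lemma3p5:
  assumes "open_X U" and "U \<noteq> {}" and "open_X W" and "W \<noteq> {}"
  shows "\<exists>N. \<forall>n\<ge>N. (T ^^ n) ` U \<inter> W \<noteq> {}"
proof -
  obtain x x' where x: "x \<in> U" "x' \<in> W" using assms(2,4) by blast
  then have X: "x \<in> Xsp" "x' \<in> Xsp" using assms(1,3) unfolding open_X_def by blast+
  obtain m1 m2 where
    m1: "\<forall>m\<ge>m1. \<forall>y\<in>Xsp. y m = x m \<longrightarrow> y \<in> U" and
    m2: "\<forall>m\<ge>m2. \<forall>y\<in>Xsp. y m = x' m \<longrightarrow> y \<in> W"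
    using open_X_contains_cylinder[OF assms(1) x(1)] open_X_contains_cylinder[OF assms(3) x(2)]
    by blast
  define m where "m = max 1 (max m1 m2)"
  then have m: "1 \<le> m" "m1 \<le> m" "m2 \<le> m" by auto
  obtain N where N: "\<forall>n\<ge>N. hit_after m (x m) (x' m) n"
    using hit_after_eventually[OF m(1) Xsp_in_V[OF X(1)] Xsp_in_V[OF X(2)]] by blast
  have "(T ^^ n) ` U \<inter> W \<noteq> {}" if n: "N \<le> n" for n
  proof -
    obtain z where z: "z \<in> Xsp" "z m = x m" "(T ^^ n) z \<in> Xsp" "(T ^^ n) z m = x' m"
      using hit_after_orbit[of m "x m" "x' m" n] N n by blast
    have "z \<in> U" using m1 m(2) z(1,2) by blast
    moreover have "(T ^^ n) z \<in> W" using m2 m(3) z(3,4) by blast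
    ultimately show ?thesis by blast
  qed
  then show ?thesis by blast
qed

end
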